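(* If $u,v\in\mathbb{P}^*$ both have increasing/decreasing factorizations, then $u\backsim v$ if and only if $u$ is a rearrangement of $v$.
   Context: $\mathbb{P}^*$ is the set of finite words over the positive integers $\mathbb{P}$ (usual order). For $w=w_1\ldots w_n$, $\mathrm{wt}(w)=t^{n}x^{\sum_i w_i}$. For words $u,w$, $u\le w$ (generalized factor order) if there are $|u|$ consecutive letters of $w$ whose $i$-th letter is $\ge$ the $i$-th letter of $u$ for each $i$. $\mathcal{F}(u)=\{w\in\mathbb{P}^*:u\le w\}$ and $F(u;t,x)=\sum_{w\in\mathcal{F}(u)}\mathrm{wt}(w)$. Two words are Wilf equivalent, $u\backsim v$, iff $F(u;t,x)=F(v;t,x)$. A word $u=u_1\ldots u_n$ has an increasing/decreasing factorization if $u_1\le\cdots\le u_n$ or there is $k<n$ with $u_1\le\cdots\le u_k>u_{k+1}\ge\cdots\ge u_n$. A rearrangement of $u$ is a word obtained by permuting its letters. *)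

theory Defs
  imports Main "HOL-Computational_Algebra.Formal_Power_Series"
begin

definition pword :: "nat list \<Rightarrow> bool" where
  "pword w \<longleftrightarrow> (\<forall>a\<in>set w. 0 < a)"

definition gfo :: "nat list \<Rightarrow> nat list \<Rightarrow> bool" where
  "gfo u w \<longleftrightarrow> (\<exists>i. i + length u \<le> length w \<and> (\<forall>j<length u. u ! j \<le> w ! (i + j)))"

text \<open>F(u;t,x) = sum over w in F(u) of t^|w| x^(sum of letters), as a bivariate formal power
  series: outer variable t, inner variable x.\<close>
definition F :: "nat list \<Rightarrow> int fps fps" where
  "F u = Abs_fps (\<lambda>n. Abs_fps (\<lambda>m.
      int (card {w. pword w \<and> gfo u w \<and> length w = n \<and> sum_list w = m})))"

definition wilf_equiv :: "nat list \<Rightarrow> nat list \<Rightarrow> bool" where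
  "wilf_equiv u v \<longleftrightarrow> F u = F v"

text \<open>Increasing/decreasing factorization (1-indexed k in the paper, 1 \<le> k < n).\<close>
definition inc_dec :: "nat list \<Rightarrow> bool" where
  "inc_dec u \<longleftrightarrow> sorted u \<or>
     (\<exists>k. 0 < k \<and> k < length u \<and> sorted (take k u) \<and> u ! (k - 1) > u ! k
          \<and> sorted_wrt (\<ge>) (drop k u))"

definition rearrangement :: "nat list \<Rightarrow> nat list \<Rightarrow> bool" where
  "rearrangement u v \<longleftrightarrow> mset u = mset v"

end

theory Submission
  imports Defs
begin

text \<open>
  The coefficients of F u count the positive words of length L and sum m
  containing u; such a word dominates u at some position, so by inclusion-exclusion the count
  is a signed sum over nonempty position sets T.  Dominating u at all positions of T means
  dominating the pointwise maximum (envelope) of the shifted copies of u, and the number of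
  such words depends only on the envelope's total weight.  If u has an increasing/decreasing
  factorization, every level set {j. l \<le> u!j} is an interval of length c(l), so the weight
  is L + \<Sum>l\<ge>2 |\<Union>i\<in>T [i, i + c(l))|: it depends only on the level counts c(l), which
  rearrangements share.  Conversely, this "excess" of T splits into one "gap gain"
  \<Sum>l min(g, c(l)) per gap g of T.  Inducting on d with L = |u| + d, all inclusion-exclusion
  terms except T = {0,d} agree, so the pair excesses agree; this gives equal gap gains, hence
  equal level counts, hence equal multisets.  The sections follow this order.
\<close>

section \<open>Sizes of unions of equal-length intervals\<close>

definition cover_size :: "nat set \<Rightarrow> nat \<Rightarrow> nat" where
  "cover_size T c = card (\<Union>i\<in>T. {i..<i+c})"

lemma cover_size_singleton: "cover_size {t} c = c"
  by (simp add: cover_size_def)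

lemma cover_size_insert_max:
  assumes "finite T" "T \<noteq> {}" "\<forall>x\<in>T. x < t"
  shows "cover_size (insert t T) c = cover_size T c + min (t - Max T) c"
proof -
  define s where "s = Max T"
  define U where "U = (\<Union>i\<in>T. {i..<i+c})"
  have sT: "s \<in> T" using assms s_def by simp
  have st: "s < t" using assms sT by auto
  have U_below: "\<forall>k\<in>U. k < s + c" using assms unfolding U_def s_def
    by (auto, metis Max_ge add_le_mono1 le_less_trans not_le)
  have last_in_U: "{s..<s+c} \<subseteq> U" using sT unfolding U_def by auto
  have new_part: "(\<Union>i\<in>insert t T. {i..<i+c}) = U \<union> {max t (s+c)..<t+c}"
  proof -
    have "{t..<t+c} \<subseteq> U \<union> {max t (s+c)..<t+c}"
    proof
      fix k assume k: "k \<in> {t..<t+c}"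
      show "k \<in> U \<union> {max t (s+c)..<t+c}"
      proof (cases "k < s + c")
        case True then have "k \<in> {s..<s+c}" using k st by auto
        then show ?thesis using last_in_U by auto
      qed (use k in auto)
    qed
    then show ?thesis unfolding U_def by auto
  qed
  have "U \<inter> {max t (s+c)..<t+c} = {}" using U_below by auto
  then have "card (U \<union> {max t (s+c)..<t+c}) = card U + card {max t (s+c)..<t+c}"
    by (intro card_Un_disjoint) (use assms in \<open>auto simp: U_def\<close>)
  moreover have "card {max t (s+c)..<t+c} = min (t - s) c" using st by auto
  ultimately show ?thesis using new_part unfolding cover_size_def U_def s_def by simp
qed

section \<open>Level sets of increasing/decreasing words\<close>

lemma inc_dec_no_valley:
  assumes "inc_dec u" "j1 \<le> j2" "j2 \<le> j3" "j3 < length u"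
  shows "min (u!j1) (u!j3) \<le> u!j2"
proof -
  from assms(1) consider "sorted u" | k where "0 < k" "k < length u" "sorted (take k u)"
    "sorted_wrt (\<ge>) (drop k u)" unfolding inc_dec_def by blast
  then show ?thesis
  proof cases
    case 1
    then have "u!j1 \<le> u!j2" using assms by (intro sorted_nth_mono) auto
    then show ?thesis by linarith
  next
    case 2
    show ?thesis
    proof (cases "j2 < k")
      case True
      have "take k u ! j1 \<le> take k u ! j2"
        using 2 True assms by (intro sorted_nth_mono) auto
      then have "u!j1 \<le> u!j2" using True assms by simp
      then show ?thesis by linarith
    next
      case False
      have "u!j3 \<le> u!j2"
      proof (cases "j2 = j3")
        case False
        then have idx: "j2 - k < j3 - k" "j3 - k < length (drop k u)"
          using \<open>\<not> j2 < k\<close> assms by auto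
        have "\<forall>i j. i < j \<longrightarrow> j < length (drop k u) \<longrightarrow> drop k u ! j \<le> drop k u ! i"
          using 2(4) by (simp only: sorted_wrt_iff_nth_less)
        then have "drop k u ! (j3 - k) \<le> drop k u ! (j2 - k)" using idx by blast
        then show ?thesis using \<open>\<not> j2 < k\<close> assms by simp
      qed simp
      then show ?thesis by linarith
    qed
  qed
qed

lemma convex_set_is_interval:
  fixes S :: "nat set"
  assumes "finite S" "\<And>a b c. a \<in> S \<Longrightarrow> c \<in> S \<Longrightarrow> a \<le> b \<Longrightarrow> b \<le> c \<Longrightarrow> b \<in> S"
  shows "\<exists>p. S = {p..<p + card S}"
proof (cases "S = {}")
  case False
  have mn: "Min S \<in> S" "Max S \<in> S" using assms False by auto
  have "S = {Min S..Max S}"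
  proof
    show "S \<subseteq> {Min S..Max S}" using assms(1) by auto
    show "{Min S..Max S} \<subseteq> S" using assms(2)[OF mn] by auto
  qed
  moreover have "Min S \<le> Max S" using assms(1) False by simp
  ultimately have "S = {Min S..<Min S + card S}"
    by (metis Suc_diff_le add_Suc_right atLeastLessThanSuc_atLeastAtMost card_atLeastAtMost
        le_add_diff_inverse)
  then show ?thesis by blast
qed simp

definition level_count :: "nat list \<Rightarrow> nat \<Rightarrow> nat" where
  "level_count u l = card {j. j < length u \<and> l \<le> u!j}"

lemma level_set_interval:
  assumes "inc_dec u"
  shows "\<exists>p. {j. j < length u \<and> l \<le> u!j} = {p..<p + level_count u l}"
  unfolding level_count_def
proof (rule convex_set_is_interval)
  fix a b c assume "a \<in> {j. j < length u \<and> l \<le> u!j}" "c \<in> {j. j < length u \<and> l \<le> u!j}"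
    "a \<le> b" "b \<le> c"
  then show "b \<in> {j. j < length u \<and> l \<le> u!j}"
    using inc_dec_no_valley[OF assms, of a b c] by auto
qed simp

lemma level_count_filter: "level_count u l = length (filter (\<lambda>x. l \<le> x) u)"
  by (simp add: level_count_def length_filter_conv_card)

lemma level_count_antimono: "l \<le> l' \<Longrightarrow> level_count u l' \<le> level_count u l"
  unfolding level_count_def by (rule card_mono) auto

lemma level_count_low: "pword u \<Longrightarrow> l \<le> 1 \<Longrightarrow> level_count u l = length u"
  unfolding level_count_filter pword_def by (subst filter_True) auto

lemma level_count_high: "\<forall>a\<in>set u. a \<le> B \<Longrightarrow> B < l \<Longrightarrow> level_count u l = 0"
  unfolding level_count_filter by (auto simp: filter_empty_conv)

lemma mset_eq_iff_level_counts:
  "mset u = mset v \<longleftrightarrow> (\<forall>l. level_count u l = level_count v l)"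
proof
  assume "mset u = mset v"
  then show "\<forall>l. level_count u l = level_count v l"
    unfolding level_count_filter by (metis mset_filter size_mset)
next
  assume eq: "\<forall>l. level_count u l = level_count v l"
  have split: "length (filter (\<lambda>x. a \<le> x) w)
      = count (mset w) a + length (filter (\<lambda>x. Suc a \<le> x) w)" for a and w :: "nat list"
    by (induction w) auto
  show "mset u = mset v"
  proof (rule multiset_eqI)
    fix a show "count (mset u) a = count (mset v) a"
      using eq[rule_format, of a] eq[rule_format, of "Suc a"] split[of a u] split[of a v]
      unfolding level_count_filter by simp
  qed
qed

section \<open>Counting words that dominate a bound\<close>

lemma finite_lists_length_sum: "finite {z::nat list. length z = L \<and> sum_list z = s}"
proof (rule finite_subset)
  show "{z::nat list. length z = L \<and> sum_list z = s} \<subseteq> {z. set z \<subseteq> {0..s} \<and> length z = L}"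
    using member_le_sum_list by fastforce
  show "finite {z. set z \<subseteq> {0..s} \<and> length z = L}" by (rule finite_lists_length_eq) simp
qed

text \<open>The number of words of length L and sum m dominating a bound of total weight s.\<close>
definition dominating_count :: "nat \<Rightarrow> nat \<Rightarrow> nat \<Rightarrow> nat" where
  "dominating_count L m s =
     (if s \<le> m then card {z::nat list. length z = L \<and> sum_list z = m - s} else 0)"

lemma sum_list_as_sum: "length w = L \<Longrightarrow> sum_list w = (\<Sum>k<L. w!k)"
  by (simp add: sum_list_sum_nth lessThan_atLeast0)

text \<open>Subtracting the bound h is a bijection onto all words of length L and sum m - \<Sum>h, so the
  count depends on h only through its total weight.\<close>
lemma card_dominating:
  "card {w. length w = L \<and> sum_list w = m \<and> (\<forall>k<L. h k \<le> w!k)} = dominating_count L m (\<Sum>k<L. h k)"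
proof (cases "(\<Sum>k<L. h k) \<le> m")
  case False
  have "{w. length w = L \<and> sum_list w = m \<and> (\<forall>k<L. h k \<le> w!k)} = {}"
  proof (rule ccontr)
    assume "\<not> ?thesis"
    then obtain w where w: "length w = L" "sum_list w = m" "\<forall>k<L. h k \<le> w!k" by auto
    then have "(\<Sum>k<L. h k) \<le> (\<Sum>k<L. w!k)" by (intro sum_mono) auto
    then show False using w False sum_list_as_sum[OF w(1)] by simp
  qed
  then show ?thesis using False unfolding dominating_count_def by (simp only: card.empty if_False)
next
  case True
  define H where "H = (\<Sum>k<L. h k)"
  define add_h where "add_h z = map (\<lambda>k. z!k + h k) [0..<L]" for z :: "nat list"
  define sub_h where "sub_h w = map (\<lambda>k. w!k - h k) [0..<L]" for w :: "nat list"
  let ?A = "{z::nat list. length z = L \<and> sum_list z = m - H}"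
  let ?B = "{w. length w = L \<and> sum_list w = m \<and> (\<forall>k<L. h k \<le> w!k)}"
  have "bij_betw add_h ?A ?B"
  proof (rule bij_betw_byWitness[where f'=sub_h])
    show "\<forall>a\<in>?A. sub_h (add_h a) = a" by (auto simp: add_h_def sub_h_def intro: nth_equalityI)
    show "\<forall>a\<in>?B. add_h (sub_h a) = a" by (auto simp: add_h_def sub_h_def intro: nth_equalityI)
    show "add_h ` ?A \<subseteq> ?B"
    proof
      fix w assume "w \<in> add_h ` ?A"
      then obtain z where z: "z \<in> ?A" "w = add_h z" by auto
      have "sum_list w = (\<Sum>k<L. z!k + h k)" using z by (simp add: add_h_def sum_list_as_sum)
      also have "\<dots> = (\<Sum>k<L. z!k) + H" by (simp add: sum.distrib H_def)
      also have "\<dots> = m" using z True H_def sum_list_as_sum[of z L] by simp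
      finally show "w \<in> ?B" using z by (simp add: add_h_def)
    qed
    show "sub_h ` ?B \<subseteq> ?A"
    proof
      fix z assume "z \<in> sub_h ` ?B"
      then obtain w where w: "w \<in> ?B" "z = sub_h w" by auto
      have "(\<Sum>k<L. w!k - h k) + H = (\<Sum>k<L. w!k - h k + h k)" by (simp add: sum.distrib H_def)
      also have "\<dots> = (\<Sum>k<L. w!k)" using w by (intro sum.cong) auto
      also have "\<dots> = m" using w sum_list_as_sum[of w L] by simp
      finally have "(\<Sum>k<L. w!k - h k) = m - H" by simp
      then show "z \<in> ?A" using w by (simp add: sub_h_def sum_list_as_sum)
    qed
  qed
  then show ?thesis using True by (simp add: dominating_count_def H_def bij_betw_same_card)
qed

text \<open>The weight s is recovered from the counts: it is the least m with a nonzero count.\<close>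
lemma dominating_count_inj:
  assumes "\<And>m. dominating_count L m a = dominating_count L m b"
  shows "a = b"
proof -
  have one: "dominating_count L s s = 1" for s
  proof -
    have "{z::nat list. length z = L \<and> sum_list z = 0} = {replicate L 0}"
      by (auto simp: sum_list_eq_0_iff intro: replicate_eqI)
    then show ?thesis by (simp add: dominating_count_def)
  qed
  show ?thesis
  proof (rule ccontr)
    assume "a \<noteq> b"
    then consider "a < b" | "b < a" by linarith
    then show False
    proof cases
      case 1 then show False using assms[of a] one[of a] by (simp add: dominating_count_def)
    next
      case 2 then show False using assms[of b] one[of b] by (simp add: dominating_count_def)
    qed
  qed
qed

section \<open>Envelopes and their weights\<close>

text \<open>The envelope of u over the positions T: the largest letter of a shifted copy of u at
  position k, and at least 1 since all letters are positive.\<close>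
definition envelope :: "nat list \<Rightarrow> nat set \<Rightarrow> nat \<Rightarrow> nat" where
  "envelope u T k = Max (insert 1 ((\<lambda>i. u!(k-i)) ` {i\<in>T. i \<le> k \<and> k < i + length u}))"

lemma envelope_le_iff:
  assumes "finite T"
  shows "envelope u T k \<le> x \<longleftrightarrow> 1 \<le> x \<and> (\<forall>i\<in>T. i \<le> k \<and> k < i + length u \<longrightarrow> u!(k-i) \<le> x)"
  unfolding envelope_def using assms by (subst Max_le_iff) auto

lemma le_envelope_iff:
  assumes "finite T"
  shows "l \<le> envelope u T k \<longleftrightarrow> l \<le> 1 \<or> (\<exists>i\<in>T. i \<le> k \<and> k < i + length u \<and> l \<le> u!(k-i))"
  unfolding envelope_def using assms by (subst Max_ge_iff) auto

lemma sum_superlevel_sets: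
  fixes h :: "nat \<Rightarrow> nat"
  assumes "\<forall>k<L. h k \<le> B"
  shows "(\<Sum>k<L. h k) = (\<Sum>l\<in>{1..B}. card {k. k < L \<and> l \<le> h k})"
proof -
  have "(\<Sum>k<L. h k) = (\<Sum>k<L. \<Sum>l\<in>{1..B}. of_bool (l \<le> h k))"
  proof (rule sum.cong[OF refl])
    fix k assume "k \<in> {..<L}"
    then have "{1..B} \<inter> {l. l \<le> h k} = {1..h k}" using assms by auto
    then show "h k = (\<Sum>l\<in>{1..B}. of_bool (l \<le> h k))" by simp
  qed
  also have "\<dots> = (\<Sum>l\<in>{1..B}. \<Sum>k<L. of_bool (l \<le> h k))" by (rule sum.swap)
  also have "\<dots> = (\<Sum>l\<in>{1..B}. card {k. k < L \<and> l \<le> h k})"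
  proof (rule sum.cong[OF refl])
    fix l
    have "{..<L} \<inter> {k. l \<le> h k} = {k. k < L \<and> l \<le> h k}" by auto
    then show "(\<Sum>k<L. of_bool (l \<le> h k)) = card {k. k < L \<and> l \<le> h k}" by simp
  qed
  finally show ?thesis .
qed

text \<open>For an increasing/decreasing word each superlevel set of the envelope (at a level l \<ge> 2)
  is a translate of the union of the intervals [i, i + level_count u l).\<close>
lemma envelope_superlevel_card:
  assumes "inc_dec u" "finite T" "\<forall>i\<in>T. i + length u \<le> L" "2 \<le> l"
  shows "card {k. k < L \<and> l \<le> envelope u T k} = cover_size T (level_count u l)"
proof -
  obtain p where p: "{j. j < length u \<and> l \<le> u!j} = {p..<p + level_count u l}"
    using level_set_interval[OF assms(1)] by blast
  let ?c = "level_count u l"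
  have eq: "{k. k < L \<and> l \<le> envelope u T k} = (\<lambda>x. x + p) ` (\<Union>i\<in>T. {i..<i + ?c})"
  proof (intro set_eqI iffI)
    fix k assume "k \<in> {k. k < L \<and> l \<le> envelope u T k}"
    then obtain i where i: "i \<in> T" "i \<le> k" "k < i + length u" "l \<le> u!(k-i)"
      using assms(4) le_envelope_iff[OF assms(2)] by auto
    then have "k - i \<in> {j. j < length u \<and> l \<le> u!j}" by auto
    then have j: "p \<le> k - i" "k - i < p + ?c" using p by auto
    have "k = (i + (k - i - p)) + p" using i j by auto
    moreover have "i + (k - i - p) \<in> {i..<i + ?c}" using j by auto
    then have "i + (k - i - p) \<in> (\<Union>i\<in>T. {i..<i + ?c})" using i(1) by blast
    ultimately show "k \<in> (\<lambda>x. x + p) ` (\<Union>i\<in>T. {i..<i + ?c})" by blast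
  next
    fix k assume "k \<in> (\<lambda>x. x + p) ` (\<Union>i\<in>T. {i..<i + ?c})"
    then obtain x i where xi: "k = x + p" "i \<in> T" "i \<le> x" "x < i + ?c" by auto
    then have "x - i + p \<in> {p..<p + ?c}" by (simp; arith)
    then have "x - i + p \<in> {j. j < length u \<and> l \<le> u!j}" by (simp only: p)
    then have j: "x - i + p < length u" "l \<le> u!(x - i + p)" by auto
    have ki: "k - i = x - i + p" "i \<le> k" using xi by auto
    have "i + length u \<le> L" using assms(3) xi(2) by blast
    then have "k < L" using j(1) xi(1,3) by linarith
    moreover have "i \<le> k \<and> k < i + length u \<and> l \<le> u!(k-i)" using ki j by simp
    then have "l \<le> envelope u T k" unfolding le_envelope_iff[OF assms(2)] using xi(2) by blast
    ultimately show "k \<in> {k. k < L \<and> l \<le> envelope u T k}" by simp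
  qed
  have "inj (\<lambda>x::nat. x + p)" by (simp add: inj_def)
  then have "card ((\<lambda>x. x + p) ` (\<Union>i\<in>T. {i..<i + ?c})) = card (\<Union>i\<in>T. {i..<i + ?c})"
    by (simp add: card_image inj_on_def)
  then show ?thesis using eq by (simp add: cover_size_def)
qed

text \<open>The excess of the envelope over the all-ones word: it depends on u only through the
  level counts.  B is any upper bound on the letters.\<close>
definition excess :: "nat list \<Rightarrow> nat \<Rightarrow> nat set \<Rightarrow> nat" where
  "excess u B T = (\<Sum>l\<in>{2..B}. cover_size T (level_count u l))"

lemma envelope_weight:
  assumes "inc_dec u" "finite T" "\<forall>i\<in>T. i + length u \<le> L" "\<forall>a\<in>set u. a \<le> B" "1 \<le> B"
  shows "(\<Sum>k<L. envelope u T k) = L + excess u B T"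
proof -
  have "\<forall>k<L. envelope u T k \<le> B"
    using assms(4,5) by (auto simp: envelope_le_iff[OF assms(2)])
  then have "(\<Sum>k<L. envelope u T k) = (\<Sum>l\<in>{1..B}. card {k. k < L \<and> l \<le> envelope u T k})"
    by (rule sum_superlevel_sets)
  also have "{1..B} = insert 1 {2..B}" using assms(5) by auto
  also have "(\<Sum>l\<in>insert 1 {2..B}. card {k. k < L \<and> l \<le> envelope u T k})
      = card {k. k < L \<and> 1 \<le> envelope u T k} + (\<Sum>l\<in>{2..B}. card {k. k < L \<and> l \<le> envelope u T k})"
    by simp
  also have "{k. k < L \<and> 1 \<le> envelope u T k} = {..<L}" using le_envelope_iff[OF assms(2)] by auto
  also have "(\<Sum>l\<in>{2..B}. card {k. k < L \<and> l \<le> envelope u T k}) = excess u B T"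
    unfolding excess_def using envelope_superlevel_card[OF assms(1-3)] by (intro sum.cong) auto
  finally show ?thesis by simp
qed

section \<open>Inclusion-exclusion for the coefficients of F\<close>

definition containing :: "nat list \<Rightarrow> nat \<Rightarrow> nat \<Rightarrow> nat list set" where
  "containing u L m = {w. pword w \<and> gfo u w \<and> length w = L \<and> sum_list w = m}"

definition dominating_at :: "nat list \<Rightarrow> nat \<Rightarrow> nat \<Rightarrow> nat \<Rightarrow> nat list set" where
  "dominating_at u L m i =
     {w. pword w \<and> length w = L \<and> sum_list w = m \<and> (\<forall>j<length u. u!j \<le> w!(i+j))}"

lemma containing_Union: "containing u L m = (\<Union>i\<in>{i. i + length u \<le> L}. dominating_at u L m i)"
  unfolding containing_def dominating_at_def gfo_def by auto

lemma pword_iff_nth: "length w = L \<Longrightarrow> pword w \<longleftrightarrow> (\<forall>k<L. 0 < w!k)"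
  unfolding pword_def by (auto simp: in_set_conv_nth)

lemma Inter_dominating_at:
  assumes "finite T" "T \<noteq> {}" "\<forall>i\<in>T. i + length u \<le> L"
  shows "(\<Inter>i\<in>T. dominating_at u L m i)
           = {w. length w = L \<and> sum_list w = m \<and> (\<forall>k<L. envelope u T k \<le> w!k)}"
proof (intro set_eqI iffI)
  fix w assume w: "w \<in> (\<Inter>i\<in>T. dominating_at u L m i)"
  obtain i0 where "i0 \<in> T" using assms by auto
  then have w0: "pword w" "length w = L" "sum_list w = m" using w by (auto simp: dominating_at_def)
  have "envelope u T k \<le> w!k" if "k < L" for k
    unfolding envelope_le_iff[OF assms(1)]
  proof safe
    show "1 \<le> w!k" using w0 that pword_iff_nth[of w L] by auto
    fix i assume "i \<in> T" "i \<le> k" "k < i + length u"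
    then have "i \<in> T" "k - i < length u" by auto
    then have "u!(k-i) \<le> w!(i + (k-i))" using w unfolding dominating_at_def by blast
    then show "u!(k-i) \<le> w!k" using \<open>i \<le> k\<close> by simp
  qed
  then show "w \<in> {w. length w = L \<and> sum_list w = m \<and> (\<forall>k<L. envelope u T k \<le> w!k)}"
    using w0 by simp
next
  fix w assume "w \<in> {w. length w = L \<and> sum_list w = m \<and> (\<forall>k<L. envelope u T k \<le> w!k)}"
  then have w: "length w = L" "sum_list w = m" "\<And>k. k < L \<Longrightarrow> envelope u T k \<le> w!k" by auto
  have pw: "pword w" using w pword_iff_nth[of w L] envelope_le_iff[OF assms(1)] by fastforce
  show "w \<in> (\<Inter>i\<in>T. dominating_at u L m i)"
  proof
    fix i assume i: "i \<in> T"
    have "u!j \<le> w!(i+j)" if "j < length u" for j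
    proof -
      have "i + j < L" using assms(3) i that by auto
      then have "envelope u T (i+j) \<le> w!(i+j)" using w by auto
      then show ?thesis using i that envelope_le_iff[OF assms(1)] by fastforce
    qed
    then show "w \<in> dominating_at u L m i" using pw w by (auto simp: dominating_at_def)
  qed
qed

lemma card_containing_incl_excl:
  assumes "inc_dec u" "\<forall>a\<in>set u. a \<le> B" "1 \<le> B"
  shows "int (card (containing u L m)) =
    (\<Sum>T | T \<subseteq> {i. i + length u \<le> L} \<and> T \<noteq> {}.
        (-1)^(card T + 1) * int (dominating_count L m (L + excess u B T)))"
proof -
  interpret Incl_Excl finite "int o card"
    by unfold_locales (auto simp add: card_Un_disjnt)
  let ?I = "{i. i + length u \<le> L}"
  have finI: "finite ?I" by (rule finite_subset[of _ "{..L}"]) auto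
  have fin_dom: "finite (dominating_at u L m i)" for i
    by (rule finite_subset[OF _ finite_lists_length_sum[of L m]]) (auto simp: dominating_at_def)
  have "(int o card) (\<Union>(dominating_at u L m ` ?I)) =
      (\<Sum>T | T \<subseteq> ?I \<and> T \<noteq> {}. (- 1) ^ (card T + 1) * (int o card) (\<Inter>(dominating_at u L m ` T)))"
    by (rule restricted_indexed[OF finI fin_dom])
  also have "\<dots> = (\<Sum>T | T \<subseteq> ?I \<and> T \<noteq> {}.
                      (-1)^(card T + 1) * int (dominating_count L m (L + excess u B T)))"
  proof (rule sum.cong[OF refl])
    fix T assume T: "T \<in> {T. T \<subseteq> ?I \<and> T \<noteq> {}}"
    then have fT: "finite T" using finI finite_subset by blast
    have Tb: "\<forall>i\<in>T. i + length u \<le> L" using T by auto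
    have "card (\<Inter>(dominating_at u L m ` T)) = dominating_count L m (\<Sum>k<L. envelope u T k)"
      using Inter_dominating_at[OF fT _ Tb] T by (simp add: card_dominating)
    also have "(\<Sum>k<L. envelope u T k) = L + excess u B T"
      by (rule envelope_weight[OF assms(1) fT Tb assms(2,3)])
    finally show "(- 1) ^ (card T + 1) * (int o card) (\<Inter>(dominating_at u L m ` T)) =
        (-1)^(card T + 1) * int (dominating_count L m (L + excess u B T))" by simp
  qed
  finally show ?thesis using containing_Union by simp
qed

lemma wilf_equiv_iff_card_containing:
  "wilf_equiv u v \<longleftrightarrow> (\<forall>L m. card (containing u L m) = card (containing v L m))"
proof -
  have coeff: "fps_nth (fps_nth (F w) L) m = int (card (containing w L m))" for w L m
    by (simp add: F_def containing_def)
  have "F u = F v \<longleftrightarrow> (\<forall>L m. fps_nth (fps_nth (F u) L) m = fps_nth (fps_nth (F v) L) m)"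
    by (auto simp: fps_eq_iff)
  then show ?thesis unfolding wilf_equiv_def coeff by simp
qed

section \<open>Rearrangements are Wilf equivalent\<close>

text \<open>A common bound B \<ge> 1 for the letters of two words, needed to write excesses as finite sums.\<close>
lemma common_letter_bound:
  fixes u v :: "nat list"
  obtains B where "1 \<le> B" "\<forall>a\<in>set u. a \<le> B" "\<forall>a\<in>set v. a \<le> B"
proof
  show "1 \<le> sum_list u + sum_list v + 1" by simp
  show "\<forall>a\<in>set u. a \<le> sum_list u + sum_list v + 1"
    "\<forall>a\<in>set v. a \<le> sum_list u + sum_list v + 1"
    using member_le_sum_list by fastforce+
qed

text \<open>Equal level counts give equal excesses and lengths, hence equal inclusion-exclusion sums.\<close>
lemma level_counts_wilf_equiv:
  assumes "inc_dec u" "inc_dec v" "\<forall>l. level_count u l = level_count v l"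
  shows "wilf_equiv u v"
proof -
  obtain B where B: "1 \<le> B" "\<forall>a\<in>set u. a \<le> B" "\<forall>a\<in>set v. a \<le> B"
    by (rule common_letter_bound)
  have "level_count w 0 = length w" for w by (simp add: level_count_def)
  then have "length u = length v" using assms(3) by metis
  moreover have "excess u B T = excess v B T" for T
    unfolding excess_def using assms(3) by simp
  ultimately have "int (card (containing u L m)) = int (card (containing v L m))" for L m
    using card_containing_incl_excl[OF assms(1) B(2,1)] card_containing_incl_excl[OF assms(2) B(3,1)]
    by simp
  then show ?thesis unfolding wilf_equiv_iff_card_containing by simp
qed

section \<open>Excess in terms of the gaps of T\<close>

text \<open>The contribution of one gap g between consecutive elements of T to the excess.\<close>
definition gap_gain :: "nat list \<Rightarrow> nat \<Rightarrow> nat \<Rightarrow> nat" where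
  "gap_gain u B g = (\<Sum>l\<in>{2..B}. min g (level_count u l))"

lemma excess_insert_max:
  assumes "finite T" "T \<noteq> {}" "\<forall>x\<in>T. x < t"
  shows "excess u B (insert t T) = excess u B T + gap_gain u B (t - Max T)"
  unfolding excess_def gap_gain_def cover_size_insert_max[OF assms] by (simp add: sum.distrib)

lemma excess_singleton: "excess u B {t} = excess u B {0}"
  unfolding excess_def by (simp add: cover_size_singleton)

lemma excess_pair: "0 < g \<Longrightarrow> excess u B {0, g} = excess u B {0} + gap_gain u B g"
  using excess_insert_max[of "{0}" g u B] by (simp add: insert_commute)

definition small_gaps :: "nat \<Rightarrow> nat set \<Rightarrow> bool" where
  "small_gaps d T \<longleftrightarrow> (\<forall>t\<in>T. t \<noteq> Min T \<longrightarrow> (\<exists>s\<in>T. s < t \<and> t - s < d))"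

lemma excess_eq_small_gaps:
  assumes pairs: "\<And>d'. d' < d \<Longrightarrow> excess u B {0,d'} = excess v B {0,d'}" and d: "0 < d"
  shows "finite T \<Longrightarrow> T \<noteq> {} \<Longrightarrow> small_gaps d T \<Longrightarrow> excess u B T = excess v B T"
proof (induction T rule: finite_linorder_max_induct)
  case (insert b A)
  show ?case
  proof (cases "A = {}")
    case True
    then show ?thesis using pairs[OF d] by (simp add: excess_singleton[of u B b] excess_singleton[of v B b])
  next
    case False
    have mA: "Min A \<in> A" "Max A \<in> A" using False insert by auto
    have "Min A < b" using insert(2) mA by auto
    then have minI: "Min (insert b A) = Min A" by (simp add: Min_insert[OF insert(1) False] min_def)
    have gaps: "\<exists>s\<in>insert b A. s < t \<and> t - s < d" if "t \<in> insert b A" "t \<noteq> Min A" for t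
      using insert(5) that minI unfolding small_gaps_def by auto
    have "small_gaps d A" unfolding small_gaps_def
    proof (intro ballI impI)
      fix t assume t: "t \<in> A" "t \<noteq> Min A"
      then obtain s where "s \<in> insert b A" "s < t" "t - s < d" using gaps by blast
      then show "\<exists>s\<in>A. s < t \<and> t - s < d" using insert(2) t by auto
    qed
    then have rest: "excess u B A = excess v B A" using insert(3) False by blast
    have "b \<noteq> Min A" using insert(2) mA by auto
    then obtain s where s: "s \<in> insert b A" "s < b" "b - s < d" using gaps[of b] by blast
    then have "s \<le> Max A" using insert(1) by simp
    then have g: "b - Max A < d" "0 < b - Max A" using s mA insert(2) by auto
    have "gap_gain u B (b - Max A) = gap_gain v B (b - Max A)"
      using excess_pair[OF g(2), of u B] excess_pair[OF g(2), of v B] pairs[OF g(1)] pairs[OF d]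
      by simp
    then show ?thesis using rest excess_insert_max[OF insert(1) False insert(2)] by simp
  qed
qed simp

lemma small_gaps_subset:
  assumes "T \<subseteq> {0..d}" "T \<noteq> {}" "T \<noteq> {0,d}"
  shows "small_gaps d T"
  unfolding small_gaps_def
proof (intro ballI impI)
  fix t assume t: "t \<in> T" "t \<noteq> Min T"
  have fT: "finite T" using assms(1) finite_subset by blast
  have "Min T \<in> T" "Min T \<le> t" using fT assms(2) t by auto
  then have mT: "Min T \<in> T" "Min T < t" using t by auto
  show "\<exists>s\<in>T. s < t \<and> t - s < d"
  proof (cases "t - Min T < d")
    case False
    have "t \<le> d" using assms(1) t by auto
    then have td: "t = d" "Min T = 0" using False mT by auto
    then have "0 \<in> T" "d \<in> T" using mT t by auto
    then obtain z where z: "z \<in> T" "z \<noteq> 0" "z \<noteq> d" using assms(3) assms(1) by blast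
    then have "z < d" using assms(1) by fastforce
    then show ?thesis using z td by auto
  qed (use mT in blast)
qed

section \<open>Wilf equivalent words have equal level counts\<close>

text \<open>Wilf equivalent positive words have the same length: a word of length n is contained in
  some word of length n, but no word of length less than n contains it.\<close>
lemma wilf_equiv_length:
  assumes "pword u" "pword v" "wilf_equiv u v"
  shows "length u = length v"
proof -
  have fin: "finite (containing w L m)" for w L m
    by (rule finite_subset[OF _ finite_lists_length_sum[of L m]]) (auto simp: containing_def)
  have self: "containing w (length w) (sum_list w) \<noteq> {}" if "pword w" for w
    using that unfolding containing_def gfo_def by (auto intro!: exI[of _ 0])
  have short: "containing w L m = {}" if "L < length w" for w L m
    using that unfolding containing_def gfo_def by auto
  have C: "card (containing u L m) = card (containing v L m)" for L m
    using assms(3) wilf_equiv_iff_card_containing by blast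
  have "containing u L m = {} \<longleftrightarrow> containing v L m = {}" for L m
    using C[of L m] fin[of u L m] fin[of v L m] by auto
  then show ?thesis using self[OF assms(1)] self[OF assms(2)] short
    by (meson linorder_neqE_nat)
qed

text \<open>Induction on d with L = |u| + d: in the inclusion-exclusion sum all T \<subseteq> {0..d} except
  {0, d} already have equal excess, so the remaining terms agree and determine the excess.\<close>
lemma wilf_equiv_pair_excess:
  assumes "inc_dec u" "inc_dec v" "\<forall>a\<in>set u. a \<le> B" "\<forall>a\<in>set v. a \<le> B" "1 \<le> B"
    and len: "length u = length v"
    and C: "\<And>L m. card (containing u L m) = card (containing v L m)"
  shows "excess u B {0,d} = excess v B {0,d}"
proof (induction d rule: less_induct)
  case (less d)
  define L where "L = length u + d"
  define TT where "TT = {T. T \<subseteq> {i. i + length u \<le> L} \<and> T \<noteq> {}}"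
  define ie_term where
    "ie_term w T m = (-1::int)^(card T + 1) * int (dominating_count L m (L + excess w B T))" for w T m
  have I: "{i. i + length u \<le> L} = {0..d}" unfolding L_def by auto
  have finTT: "finite TT" unfolding TT_def I by (rule finite_subset[of _ "Pow {0..d}"]) auto
  have pair_in: "{0, d} \<in> TT" unfolding TT_def I by auto
  have others: "ie_term u T m = ie_term v T m" if "T \<in> TT - {{0, d}}" for T m
  proof -
    have T: "T \<subseteq> {0..d}" "T \<noteq> {}" "T \<noteq> {0,d}" using that unfolding TT_def I by auto
    have fT: "finite T" using T(1) finite_subset by blast
    have "0 < d" using T by (cases "d = 0") auto
    with less have "excess u B T = excess v B T"
      using fT T(2) small_gaps_subset[OF T] by (rule excess_eq_small_gaps)
    then show ?thesis by (simp add: ie_term_def)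
  qed
  have "dominating_count L m (L + excess u B {0,d}) = dominating_count L m (L + excess v B {0,d})"
    for m
  proof -
    have "int (card (containing u L m)) = int (card (containing v L m))" using C by simp
    then have "(\<Sum>T\<in>TT. ie_term u T m) = (\<Sum>T\<in>TT. ie_term v T m)"
      using card_containing_incl_excl[OF assms(1,3,5), of L m]
        card_containing_incl_excl[OF assms(2,4,5), of L m] len
      unfolding ie_term_def TT_def by simp
    moreover have "(\<Sum>T\<in>TT - {{0,d}}. ie_term u T m) = (\<Sum>T\<in>TT - {{0,d}}. ie_term v T m)"
      by (intro sum.cong refl others)
    ultimately have "ie_term u {0,d} m = ie_term v {0,d} m"
      using sum.remove[OF finTT pair_in, of "\<lambda>T. ie_term u T m"]
        sum.remove[OF finTT pair_in, of "\<lambda>T. ie_term v T m"] by simp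
    then show ?thesis by (simp add: ie_term_def)
  qed
  then have "L + excess u B {0,d} = L + excess v B {0,d}" by (rule dominating_count_inj)
  then show ?case by simp
qed

lemma sum_min_Suc:
  assumes "finite A"
  shows "(\<Sum>l\<in>A. min (Suc g) (f l)) = (\<Sum>l\<in>A. min g (f l)) + card (A \<inter> {l. Suc g \<le> f l})"
proof -
  have "(\<Sum>l\<in>A. min (Suc g) (f l)) = (\<Sum>l\<in>A. min g (f l) + of_bool (Suc g \<le> f l))"
    by (intro sum.cong) auto
  then show ?thesis using assms by (simp add: sum.distrib Int_def)
qed

text \<open>For antitone f and g whose superlevel sets within [a, b] have equal sizes, f dominates g
  on [a, b]: if g l > f l, the level g l would be reached by f only left of l but by g on all
  of [a, l].\<close>
lemma antitone_superlevel_cards_le: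
  fixes f g :: "nat \<Rightarrow> nat"
  assumes anti_f: "\<And>l l'. l \<le> l' \<Longrightarrow> f l' \<le> f l" and anti_g: "\<And>l l'. l \<le> l' \<Longrightarrow> g l' \<le> g l"
    and cards: "\<And>n. card ({a..b} \<inter> {l. n \<le> f l}) = card ({a..b} \<inter> {l. n \<le> g l})"
    and l: "l \<in> {a..b}"
  shows "g l \<le> f l"
proof (rule ccontr)
  assume lt: "\<not> g l \<le> f l"
  have "{a..b} \<inter> {l'. g l \<le> f l'} \<subseteq> {a..<l}"
  proof
    fix x assume x: "x \<in> {a..b} \<inter> {l'. g l \<le> f l'}"
    have "\<not> l \<le> x" using anti_f[of l x] x lt by auto
    then show "x \<in> {a..<l}" using x by auto
  qed
  then have "card ({a..b} \<inter> {l'. g l \<le> f l'}) \<le> card {a..<l}" by (intro card_mono) auto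
  moreover have "{a..l} \<subseteq> {a..b} \<inter> {l'. g l \<le> g l'}" using anti_g l by auto
  then have "card {a..l} \<le> card ({a..b} \<inter> {l'. g l \<le> g l'})" by (intro card_mono) auto
  ultimately show False using cards[of "g l"] l by simp arith
qed

lemma antitone_eq_from_superlevel_cards:
  fixes f g :: "nat \<Rightarrow> nat"
  assumes "\<And>l l'. l \<le> l' \<Longrightarrow> f l' \<le> f l" "\<And>l l'. l \<le> l' \<Longrightarrow> g l' \<le> g l"
    and cards: "\<And>n. card ({a..b} \<inter> {l. n \<le> f l}) = card ({a..b} \<inter> {l. n \<le> g l})"
    and "l \<in> {a..b}"
  shows "f l = g l"
proof (rule order_antisym)
  have cards': "card ({a..b} \<inter> {l. n \<le> g l}) = card ({a..b} \<inter> {l. n \<le> f l})" for n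
    using cards[of n] by (rule sym)
  show "f l \<le> g l" using assms(2,1) cards' assms(4) by (rule antitone_superlevel_cards_le)
  show "g l \<le> f l" using assms by (rule antitone_superlevel_cards_le)
qed

text \<open>Equal pair excesses give equal gap gains, whose increments are the sizes of the superlevel
  sets of the level counts on [2, B]; the levels outside [2, B] are fixed by length and bound.\<close>
lemma wilf_equiv_level_counts:
  assumes "pword u" "pword v" "inc_dec u" "inc_dec v" "wilf_equiv u v"
  shows "level_count u l = level_count v l"
proof -
  obtain B where B: "1 \<le> B" "\<forall>a\<in>set u. a \<le> B" "\<forall>a\<in>set v. a \<le> B"
    by (rule common_letter_bound)
  have len: "length u = length v" by (rule wilf_equiv_length[OF assms(1,2,5)])
  have pairs: "excess u B {0,d} = excess v B {0,d}" for d
    using wilf_equiv_pair_excess[OF assms(3,4) B(2,3,1) len] assms(5)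
    unfolding wilf_equiv_iff_card_containing by blast
  have gains: "gap_gain u B g = gap_gain v B g" for g
  proof (cases "g = 0")
    case False
    then show ?thesis using excess_pair[of g u B] excess_pair[of g v B] pairs[of g] pairs[of 0] by simp
  qed (simp add: gap_gain_def)
  have cards: "card ({2..B} \<inter> {l. n \<le> level_count u l}) = card ({2..B} \<inter> {l. n \<le> level_count v l})"
    for n
  proof (cases n)
    case (Suc g)
    then show ?thesis using gains[of g] gains[of "Suc g"] sum_min_Suc[of "{2..B}" g]
      unfolding gap_gain_def by simp
  qed simp
  have mid: "level_count u l = level_count v l" if "l \<in> {2..B}" for l
    by (rule antitone_eq_from_superlevel_cards[of "level_count u" "level_count v", OF
          level_count_antimono level_count_antimono cards that])
  show ?thesis
  proof (cases "l \<le> 1")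
    case True
    then show ?thesis using level_count_low[OF assms(1)] level_count_low[OF assms(2)] len by simp
  next
    case False
    then show ?thesis using mid level_count_high[OF B(2)] level_count_high[OF B(3)]
      by (cases "B < l") auto
  qed
qed

theorem theorem4:
  fixes u v :: "nat list"
  assumes "pword u" and "pword v"
    and "inc_dec u" and "inc_dec v"
  shows "wilf_equiv u v \<longleftrightarrow> rearrangement u v"
proof -
  have "wilf_equiv u v \<longleftrightarrow> (\<forall>l. level_count u l = level_count v l)"
    using wilf_equiv_level_counts[OF assms] level_counts_wilf_equiv[OF assms(3,4)] by blast
  then show ?thesis unfolding rearrangement_def mset_eq_iff_level_counts .
qed

end
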